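(* Assume (H0), (H1), (H2) with $\partial\Omega$ unbounded, fix $x_0\in\partial\Omega$, and let $f\in L^{p'}(\partial\Omega,\nu)\cap L^{p'}(\partial\Omega,\nu_J)$ with $\int_{\partial\Omega}f\,d\nu=0$. For $k\in\mathbb N$ set $f_k=f\chi_{B_k}-\frac{1}{\nu(B_0)}\Big[\int_{B_k}f\,d\nu\Big]\chi_{B_0}$ (on $\partial\Omega$). Then for every $h\in HB^\theta_{p,p}(\partial\Omega)$, $\sup_{k\in\mathbb N}\big|\int_{\partial\Omega}f_k\,h\,d\nu\big|<\infty$.
   Context: Setting. Fix $1<p<\infty$, $p'=p/(p-1)$. $(X,d,\mu)$ complete metric measure space, $\Omega\subset X$ a domain, $\partial\Omega=\overline\Omega\setminus\Omega$, $d_\Omega(x)=d(x,\partial\Omega)$. Standing hypotheses: (H0) $\Omega$ is uniform: there is $C_U\ge1$ such that any $x,y\in\Omega$ are joined by a rectifiable curve $\gamma$ in $\Omega$ with $\ell(\gamma)\le C_Ud(x,y)$ and $\min\{\ell(\gamma_{x,z}),\ell(\gamma_{z,y})\}\le C_Ud_\Omega(z)$ for all $z$ on $\gamma$. (H1) $\mu|_{\overline\Omega}$ is doubling and $(\overline\Omega,d,\mu)$ supports a $p$-Poincaré inequality. (H2) $\partial\Omega$ is complete, uniformly perfect, doubling, with a Radon measure $\nu$ and constants $C\ge1$, $0<\Theta<p$ such that $C^{-1}\mu(B(x,r)\cap\Omega)r^{-\Theta}\le\nu(B(x,r))\le C\mu(B(x,r)\cap\Omega)r^{-\Theta}$ for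 $x\in\partial\Omega$, $0<r<2\operatorname{diam}\partial\Omega$. $\theta=1-\Theta/p$. $B_0=\{x\in\overline\Omega:d(x,x_0)<1\}$, $B_k=\{x\in\overline\Omega:d(x,x_0)<2^k\}$. $J(x,x_0)=d(x,x_0)^{p'\theta}\nu(B(x_0,d(x_0,x)))^{p'/p}$, $d\nu_J=J(\cdot,x_0)d\nu$. $HB^\theta_{p,p}(\partial\Omega)$: measurable $h$ on $\partial\Omega$ with $\iint\frac{|h(x)-h(y)|^p}{d(x,y)^{\theta p}\nu(B(x,d(x,y)))}d\nu(y)d\nu(x)<\infty$. *)

theory Defs
  imports "HOL-Analysis.Analysis"
begin

definition curve_length :: "(real \<Rightarrow> 'a::metric_space) \<Rightarrow> real \<Rightarrow> real \<Rightarrow> ereal" where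
  "curve_length \<gamma> a b =
     (SUP ts \<in> {ts::real list. ts \<noteq> [] \<and> sorted ts \<and> hd ts = a \<and> last ts = b \<and> set ts \<subseteq> {a..b}}.
        ereal (\<Sum>i<length ts - 1. dist (\<gamma> (ts ! i)) (\<gamma> (ts ! Suc i))))"

definition arclength_curve_in :: "'a::metric_space set \<Rightarrow> (real \<Rightarrow> 'a) \<Rightarrow> real \<Rightarrow> bool" where
  "arclength_curve_in S \<gamma> L \<longleftrightarrow>
     0 \<le> L \<and> continuous_on {0..L} \<gamma> \<and> \<gamma> ` {0..L} \<subseteq> S \<and>
     (\<forall>s t. 0 \<le> s \<and> s \<le> t \<and> t \<le> L \<longrightarrow> curve_length \<gamma> s t = ereal (t - s))"

definition domain :: "'a::metric_space set \<Rightarrow> bool" where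
  "domain \<Omega> \<longleftrightarrow> open \<Omega> \<and> connected \<Omega> \<and> \<Omega> \<noteq> {}"

definition bdry :: "'a::metric_space set \<Rightarrow> 'a set" where
  "bdry \<Omega> = closure \<Omega> - \<Omega>"

text \<open>(H0): uniform domain. A point z on gamma is gamma(t); the sub-arcs gamma_{x,z}, gamma_{z,y}
  have lengths t and L - t because gamma is parametrised by arc length.\<close>
definition uniform_domain :: "'a::metric_space set \<Rightarrow> bool" where
  "uniform_domain \<Omega> \<longleftrightarrow> domain \<Omega> \<and>
     (\<exists>CU\<ge>1. \<forall>x\<in>\<Omega>. \<forall>y\<in>\<Omega>. \<exists>\<gamma> L. arclength_curve_in \<Omega> \<gamma> L \<and> \<gamma> 0 = x \<and> \<gamma> L = y \<and>
        L \<le> CU * dist x y \<and>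
        (\<forall>t\<in>{0..L}. min t (L - t) \<le> CU * infdist (\<gamma> t) (bdry \<Omega>)))"

definition epowr :: "ennreal \<Rightarrow> real \<Rightarrow> ennreal" where
  "epowr a q = (if a = \<infinity> then \<infinity> else ennreal (enn2real a powr q))"

definition doubling_on :: "'a::metric_space measure \<Rightarrow> 'a set \<Rightarrow> bool" where
  "doubling_on \<mu> S \<longleftrightarrow>
     (\<exists>C. \<forall>x\<in>S. \<forall>r>0. 0 < emeasure \<mu> (ball x r \<inter> S) \<and> emeasure \<mu> (ball x r \<inter> S) < \<infinity> \<and>
          emeasure \<mu> (ball x (2*r) \<inter> S) \<le> ennreal C * emeasure \<mu> (ball x r \<inter> S))"

definition upper_gradient_in :: "'a::metric_space set \<Rightarrow> ('a \<Rightarrow> real) \<Rightarrow> ('a \<Rightarrow> ennreal) \<Rightarrow> bool" where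
  "upper_gradient_in S u g \<longleftrightarrow> g \<in> borel_measurable borel \<and>
     (\<forall>\<gamma> L. arclength_curve_in S \<gamma> L \<longrightarrow>
        ennreal \<bar>u (\<gamma> 0) - u (\<gamma> L)\<bar> \<le> (\<integral>\<^sup>+ t. g (\<gamma> t) * indicator {0..L} t \<partial>lborel))"

definition poincare_on :: "real \<Rightarrow> 'a::metric_space measure \<Rightarrow> 'a set \<Rightarrow> bool" where
  "poincare_on p \<mu> S \<longleftrightarrow>
     (\<exists>C>0. \<exists>lam\<ge>1. \<forall>u g x r.
        u \<in> borel_measurable \<mu> \<and>
        (\<forall>z\<in>S. \<forall>s>0. set_integrable \<mu> (ball z s \<inter> S) u) \<and>
        upper_gradient_in S u g \<and> x \<in> S \<and> r > 0 \<and>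
        (\<integral>\<^sup>+ y. epowr (g y) p * indicator (ball x (lam*r) \<inter> S) y \<partial>\<mu>) < \<infinity> \<longrightarrow>
        (let B = ball x r \<inter> S; uB = (\<integral>y\<in>B. u y \<partial>\<mu>) / measure \<mu> B in
           (\<integral>y\<in>B. \<bar>u y - uB\<bar> \<partial>\<mu>) / measure \<mu> B
             \<le> C * r * ((enn2real (\<integral>\<^sup>+ y. epowr (g y) p * indicator (ball x (lam*r) \<inter> S) y \<partial>\<mu>))
                          / measure \<mu> (ball x (lam*r) \<inter> S)) powr (1/p)))"

definition uniformly_perfect :: "'a::metric_space set \<Rightarrow> bool" where
  "uniformly_perfect E \<longleftrightarrow>
     (\<exists>C\<ge>1. \<forall>x\<in>E. \<forall>r>0. E - ball x r \<noteq> {} \<longrightarrow> (E \<inter> ball x r) - ball x (r / C) \<noteq> {})"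

definition metric_doubling :: "'a::metric_space set \<Rightarrow> bool" where
  "metric_doubling E \<longleftrightarrow>
     (\<exists>N::nat. \<forall>x\<in>E. \<forall>r>0. \<exists>F. finite F \<and> card F \<le> N \<and> F \<subseteq> E \<and>
        ball x r \<inter> E \<subseteq> (\<Union>y\<in>F. ball y (r/2)))"

definition standing_hyps ::
  "real \<Rightarrow> 'a::metric_space measure \<Rightarrow> 'a set \<Rightarrow> 'a measure \<Rightarrow> real \<Rightarrow> bool" where
  "standing_hyps p \<mu> \<Omega> \<nu> \<Theta> \<longleftrightarrow>
     1 < p \<and>
     complete (UNIV :: 'a set) \<and> sets \<mu> = sets borel \<and>
     \<comment> \<open>(H0)\<close>
     uniform_domain \<Omega> \<and>
     \<comment> \<open>(H1)\<close>
     doubling_on \<mu> (closure \<Omega>) \<and> poincare_on p \<mu> (closure \<Omega>) \<and>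
     \<comment> \<open>(H2)\<close>
     complete (bdry \<Omega>) \<and> uniformly_perfect (bdry \<Omega>) \<and> metric_doubling (bdry \<Omega>) \<and>
     sets \<nu> = sets borel \<and> emeasure \<nu> (UNIV - bdry \<Omega>) = 0 \<and>
     (\<forall>x r. r > 0 \<longrightarrow> emeasure \<nu> (ball x r) < \<infinity>) \<and>
     0 < \<Theta> \<and> \<Theta> < p \<and>
     (\<exists>C\<ge>1. \<forall>x\<in>bdry \<Omega>. \<forall>r. 0 < r \<and> (bounded (bdry \<Omega>) \<longrightarrow> r < 2 * diameter (bdry \<Omega>)) \<longrightarrow>
        ennreal (1/C) * emeasure \<mu> (ball x r \<inter> \<Omega>) * ennreal (r powr (-\<Theta>)) \<le> emeasure \<nu> (ball x r) \<and>
        emeasure \<nu> (ball x r) \<le> ennreal C * emeasure \<mu> (ball x r \<inter> \<Omega>) * ennreal (r powr (-\<Theta>)))"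

definition conj_exp :: "real \<Rightarrow> real" where
  "conj_exp p = p / (p - 1)"

definition theta_of :: "real \<Rightarrow> real \<Rightarrow> real" where
  "theta_of p \<Theta> = 1 - \<Theta> / p"

definition Bk :: "'a::metric_space set \<Rightarrow> 'a \<Rightarrow> nat \<Rightarrow> 'a set" where
  "Bk \<Omega> x0 k = {x \<in> closure \<Omega>. dist x x0 < 2 ^ k}"

definition Jweight :: "real \<Rightarrow> real \<Rightarrow> 'a::metric_space measure \<Rightarrow> 'a \<Rightarrow> 'a \<Rightarrow> real" where
  "Jweight p \<Theta> \<nu> x0 x =
     dist x x0 powr (conj_exp p * theta_of p \<Theta>) *
     measure \<nu> (ball x0 (dist x0 x)) powr (conj_exp p / p)"

definition HB :: "real \<Rightarrow> real \<Rightarrow> 'a::metric_space measure \<Rightarrow> ('a \<Rightarrow> real) set" where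
  "HB p \<theta> \<nu> = {h. h \<in> borel_measurable \<nu> \<and>
     (\<integral>\<^sup>+ x. \<integral>\<^sup>+ y. ennreal (\<bar>h x - h y\<bar> powr p /
         (dist x y powr (\<theta> * p) * measure \<nu> (ball x (dist x y)))) \<partial>\<nu> \<partial>\<nu>) < \<infinity>}"

definition fk :: "'a::metric_space measure \<Rightarrow> 'a set \<Rightarrow> 'a \<Rightarrow> ('a \<Rightarrow> real) \<Rightarrow> nat \<Rightarrow> 'a \<Rightarrow> real" where
  "fk \<nu> \<Omega> x0 f k x =
     f x * indicator (Bk \<Omega> x0 k) x
     - (1 / measure \<nu> (Bk \<Omega> x0 0)) * (\<integral>y\<in>Bk \<Omega> x0 k. f y \<partial>\<nu>) * indicator (Bk \<Omega> x0 0) x"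

end

theory Submission
  imports Defs
begin

text \<open>The integrals are bounded by the L1 norms of fh and f and the integral of h over B0, so
  it suffices to show that fh is integrable and h is integrable on bounded sets.  Since the
  Besov double integral of h is finite and the boundary has positive measure, some boundary
  point x1 has an integrable slice y \<mapsto> |h x1 - h y|^p / (d(x1,y)^(\<theta>p) \<nu>(B(x1,d(x1,y)))).
  Near x0 this slice dominates |h x1 - h y|^p; far from x0, doubling of \<nu> makes its
  denominator comparable to d(x0,y)^(\<theta>p) \<nu>(B(x0,d(x0,y))) = J^(p-1), and Young's inequality
  with weight J splits |f| |h x1 - h| into |f|^p' J plus the slice.\<close>

lemma arclength_curve_dist_le:
  assumes "arclength_curve_in S \<gamma> L" "0 \<le> s" "s \<le> t" "t \<le> L"
  shows "dist (\<gamma> s) (\<gamma> t) \<le> t - s"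
proof -
  have "ereal (\<Sum>i<length [s, t] - 1. dist (\<gamma> ([s, t] ! i)) (\<gamma> ([s, t] ! Suc i)))
          \<le> curve_length \<gamma> s t"
    unfolding curve_length_def by (rule SUP_upper) (use assms in auto)
  moreover have "curve_length \<gamma> s t = ereal (t - s)"
    using assms unfolding arclength_curve_in_def by auto
  ultimately show ?thesis by simp
qed

lemma Youngs_inequality_weighted:
  fixes p a b l :: real
  assumes p: "1 < p" and "0 \<le> a" "0 \<le> b" "0 < l"
  shows "a * b \<le> a powr conj_exp p * l + b powr p / l powr (p - 1)"
proof -
  define q where "q = conj_exp p"
  have q: "1 < q" "1/p + 1/q = 1" "p / q = p - 1"
    using p by (auto simp: q_def conj_exp_def field_simps)
  define a' where "a' = a * l powr (1/q)"
  define b' where "b' = b / l powr (1/q)"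
  have "a * b = a' * b'"
    using \<open>0 < l\<close> by (simp add: a'_def b'_def)
  also have "\<dots> \<le> a' powr q / q + b' powr p / p"
    using assms q by (intro Youngs_inequality) (auto simp: a'_def b'_def)
  also have "\<dots> = a powr q * l / q + b powr p / l powr (p - 1) / p"
    using assms q by (simp add: a'_def b'_def powr_mult powr_divide powr_powr)
  also have "\<dots> \<le> a powr q * l + b powr p / l powr (p - 1)"
    using assms q by (intro add_mono) (auto simp: divide_le_eq mult_le_cancel_left1 not_less)
  finally show ?thesis unfolding q_def .
qed

lemma connected_unbounded_dist_attained:
  fixes S :: "'a::metric_space set"
  assumes "connected S" "\<not> bounded S" "a \<in> S" "0 \<le> s"
  shows "\<exists>b\<in>S. dist a b = s"
proof -
  have "connected (dist a ` S)"
    by (rule connected_continuous_image[OF _ \<open>connected S\<close>]) (intro continuous_intros)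
  moreover obtain b where "b \<in> S" "s < dist a b"
    using assms unfolding bounded_any_center[of _ a] by (meson not_le)
  moreover have "0 \<in> dist a ` S" using \<open>a \<in> S\<close> by force
  ultimately have "s \<in> dist a ` S"
    using \<open>0 \<le> s\<close> unfolding is_interval_connected_1[symmetric] is_interval_1
    by (metis image_eqI less_eq_real_def)
  then show ?thesis by force
qed

lemma ball_inter_closure_subset:
  assumes "r \<le> infdist z (bdry \<Omega>)"
  shows "ball z r \<inter> closure \<Omega> \<subseteq> \<Omega>"
proof
  fix w assume w: "w \<in> ball z r \<inter> closure \<Omega>"
  show "w \<in> \<Omega>"
  proof (rule ccontr)
    assume "w \<notin> \<Omega>"
    then have "infdist z (bdry \<Omega>) \<le> dist z w"
      using w by (intro infdist_le) (auto simp: bdry_def)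
    with w assms show False by auto
  qed
qed

text \<open>Corkscrew condition: the midpoint of a uniform curve from a point near x to a point
  at distance comparable to r from it lies at distance comparable to r from the boundary.\<close>
lemma uniform_domain_corkscrew:
  fixes \<Omega> :: "'a::metric_space set"
  assumes ud: "uniform_domain \<Omega>" and unb: "\<not> bounded (bdry \<Omega>)"
  obtains K where "1 \<le> K"
    "\<And>x r. x \<in> bdry \<Omega> \<Longrightarrow> 0 < r \<Longrightarrow>
       \<exists>z\<in>\<Omega>. ball z (r/K) \<subseteq> ball x r \<and> ball z (r/K) \<inter> closure \<Omega> \<subseteq> \<Omega>"
proof -
  obtain CU where CU: "1 \<le> CU" and U: "\<forall>x\<in>\<Omega>. \<forall>y\<in>\<Omega>. \<exists>\<gamma> L. arclength_curve_in \<Omega> \<gamma> L \<and>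
        \<gamma> 0 = x \<and> \<gamma> L = y \<and> L \<le> CU * dist x y \<and>
        (\<forall>t\<in>{0..L}. min t (L - t) \<le> CU * infdist (\<gamma> t) (bdry \<Omega>))"
    using ud unfolding uniform_domain_def by blast
  have conn: "connected \<Omega>" using ud unfolding uniform_domain_def domain_def by auto
  have unb\<Omega>: "\<not> bounded \<Omega>"
    using unb bounded_closure unfolding bdry_def by (metis Diff_subset bounded_subset)
  define K where "K = 2 * CU * (2 + CU)"
  have "\<exists>z\<in>\<Omega>. ball z (r/K) \<subseteq> ball x r \<and> ball z (r/K) \<inter> closure \<Omega> \<subseteq> \<Omega>"
    if x: "x \<in> bdry \<Omega>" and r: "0 < r" for x r
  proof -
    define s where "s = r / (2 + CU)"
    have s: "0 < s" "r / K = s / (2 * CU)" "r = s * (2 + CU)"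
      using r CU by (auto simp: s_def K_def field_simps)
    obtain a where a: "a \<in> \<Omega>" "dist a x < s"
      using x s closure_approachable unfolding bdry_def by blast
    obtain b where b: "b \<in> \<Omega>" "dist a b = s"
      using connected_unbounded_dist_attained[OF conn unb\<Omega> a(1), of s] s(1) by auto
    obtain \<gamma> L where \<gamma>: "arclength_curve_in \<Omega> \<gamma> L" "\<gamma> 0 = a" "\<gamma> L = b" "L \<le> CU * s"
      and \<gamma>U: "\<forall>t\<in>{0..L}. min t (L - t) \<le> CU * infdist (\<gamma> t) (bdry \<Omega>)"
      using U a(1) b by metis
    have L: "0 \<le> L" using \<gamma>(1) unfolding arclength_curve_in_def by auto
    have "s \<le> L" using arclength_curve_dist_le[OF \<gamma>(1), of 0 L] L \<gamma> b by simp
    define z where "z = \<gamma> (L/2)"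
    have z: "z \<in> \<Omega>" using \<gamma>(1) L unfolding arclength_curve_in_def z_def by auto
    have "min (L/2) (L - L/2) \<le> CU * infdist z (bdry \<Omega>)"
      using \<gamma>U[rule_format, of "L/2"] L unfolding z_def by simp
    then have "L / (2 * CU) \<le> infdist z (bdry \<Omega>)"
      using CU by (simp add: field_simps)
    moreover have "r / K \<le> L / (2 * CU)"
      using \<open>s \<le> L\<close> CU s(2) by (simp add: divide_right_mono)
    ultimately have inf: "r / K \<le> infdist z (bdry \<Omega>)" by linarith
    have "dist x z \<le> s + CU * s / 2"
      using dist_triangle[of x z a] arclength_curve_dist_le[OF \<gamma>(1), of 0 "L/2"] L a(2) \<gamma>(2,4)
      by (simp add: z_def dist_commute)
    moreover have "r / K \<le> s / 2"
      unfolding s(2) using s CU by (intro divide_left_mono) auto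
    moreover have "r = 2 * s + CU * s" "0 \<le> CU * s"
      using s(1,3) CU by (auto simp: algebra_simps)
    ultimately have "dist x z + r / K \<le> r" using s(1) by linarith
    then have "ball z (r/K) \<subseteq> ball x r"
      by (smt (verit) dist_triangle mem_ball subsetI)
    then show ?thesis using z ball_inter_closure_subset[OF inf] by blast
  qed
  moreover have "1 \<le> K"
    using CU mult_mono[of 1 "2 * CU" 1 "2 + CU"] unfolding K_def by simp
  ultimately show ?thesis using that by blast
qed

lemma doubling_onE:
  fixes \<mu> :: "'a::metric_space measure"
  assumes "doubling_on \<mu> S"
  obtains C where "1 \<le> C"
    "\<And>x r. x \<in> S \<Longrightarrow> 0 < r \<Longrightarrow> 0 < measure \<mu> (ball x r \<inter> S)"
    "\<And>x r. x \<in> S \<Longrightarrow> 0 < r \<Longrightarrow> emeasure \<mu> (ball x r \<inter> S) < \<infinity>"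
    "\<And>x r. x \<in> S \<Longrightarrow> 0 < r \<Longrightarrow>
       measure \<mu> (ball x (2*r) \<inter> S) \<le> C * measure \<mu> (ball x r \<inter> S)"
proof -
  obtain C where C: "\<forall>x\<in>S. \<forall>r>0. 0 < emeasure \<mu> (ball x r \<inter> S) \<and>
      emeasure \<mu> (ball x r \<inter> S) < \<infinity> \<and>
      emeasure \<mu> (ball x (2*r) \<inter> S) \<le> ennreal C * emeasure \<mu> (ball x r \<inter> S)"
    using assms unfolding doubling_on_def by blast
  have fin: "emeasure \<mu> (ball x r \<inter> S) = ennreal (measure \<mu> (ball x r \<inter> S))"
    if "x \<in> S" "0 < r" for x r
    using C that by (intro emeasure_eq_ennreal_measure) (simp add: less_top)
  show ?thesis
  proof
    fix x r assume xr: "x \<in> S" "0 < (r::real)"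
    show "0 < measure \<mu> (ball x r \<inter> S)"
      using C xr fin[OF xr] by (metis ennreal_less_zero_iff)
    show "emeasure \<mu> (ball x r \<inter> S) < \<infinity>" using C xr by blast
    have "ennreal (measure \<mu> (ball x (2*r) \<inter> S)) \<le> ennreal C * ennreal (measure \<mu> (ball x r \<inter> S))"
      using C xr fin[OF xr] fin[of x "2*r"] by (metis mult_pos_pos zero_less_numeral)
    also have "\<dots> \<le> ennreal (max 1 C * measure \<mu> (ball x r \<inter> S))"
      by (simp add: ennreal_mult' mult_right_mono ennreal_leI)
    finally show "measure \<mu> (ball x (2*r) \<inter> S) \<le> max 1 C * measure \<mu> (ball x r \<inter> S)"
      by (subst (asm) ennreal_le_iff) auto
  qed simp
qed

lemma measure_ball_doubling_iterate:
  assumes "\<And>r. 0 < r \<Longrightarrow> measure M (ball x (2*r) \<inter> S) \<le> C * measure M (ball x r \<inter> S)"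
    and "1 \<le> C" "0 < r"
  shows "measure M (ball x (2^m * r) \<inter> S) \<le> C^m * measure M (ball x r \<inter> S)"
proof (induction m)
  case (Suc m)
  have "measure M (ball x (2^Suc m * r) \<inter> S) \<le> C * measure M (ball x (2^m * r) \<inter> S)"
    using assms by (simp add: mult.assoc)
  also have "\<dots> \<le> C * (C^m * measure M (ball x r \<inter> S))"
    using Suc assms by (intro mult_left_mono) auto
  finally show ?case by (simp add: mult.assoc)
qed simp

lemma measure_mono_finite:
  assumes "A \<subseteq> B" "A \<in> sets M" "B \<in> sets M" "emeasure M B < \<infinity>"
  shows "measure M A \<le> measure M B"
  using assms by (intro measure_mono_fmeasurable) (auto simp: fmeasurable_def)

text \<open>Corkscrew balls carry a definite part of the mass of boundary balls, so the restriction of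
  the doubling measure to the open domain is still doubling at the boundary (the boundary
  itself may carry mass).\<close>
lemma uniform_domain_doubling_at_boundary:
  fixes \<mu> :: "'a::metric_space measure"
  assumes ud: "uniform_domain \<Omega>" and unb: "\<not> bounded (bdry \<Omega>)"
    and dbl: "doubling_on \<mu> (closure \<Omega>)" and sets_\<mu>: "sets \<mu> = sets borel"
  obtains A where "1 \<le> A"
    "\<And>x r. x \<in> bdry \<Omega> \<Longrightarrow> 0 < r \<Longrightarrow> 0 < measure \<mu> (ball x r \<inter> \<Omega>)"
    "\<And>x r. x \<in> bdry \<Omega> \<Longrightarrow> 0 < r \<Longrightarrow>
       measure \<mu> (ball x (2*r) \<inter> \<Omega>) \<le> A * measure \<mu> (ball x r \<inter> \<Omega>)"
proof -
  have "open \<Omega>" using ud unfolding uniform_domain_def domain_def by auto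
  have \<Omega>_cl: "\<Omega> \<subseteq> closure \<Omega>" and bdry_cl: "bdry \<Omega> \<subseteq> closure \<Omega>"
    by (auto simp: closure_subset bdry_def)
  obtain Cm where Cm: "1 \<le> Cm"
    and pos: "\<And>x r. x \<in> closure \<Omega> \<Longrightarrow> 0 < r \<Longrightarrow> 0 < measure \<mu> (ball x r \<inter> closure \<Omega>)"
    and fin: "\<And>x r. x \<in> closure \<Omega> \<Longrightarrow> 0 < r \<Longrightarrow> emeasure \<mu> (ball x r \<inter> closure \<Omega>) < \<infinity>"
    and D: "\<And>x r. x \<in> closure \<Omega> \<Longrightarrow> 0 < r \<Longrightarrow>
              measure \<mu> (ball x (2*r) \<inter> closure \<Omega>) \<le> Cm * measure \<mu> (ball x r \<inter> closure \<Omega>)"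
    using doubling_onE[OF dbl] by metis
  obtain K where K: "1 \<le> K" and cork: "\<And>x r. x \<in> bdry \<Omega> \<Longrightarrow> 0 < r \<Longrightarrow>
      \<exists>z\<in>\<Omega>. ball z (r/K) \<subseteq> ball x r \<and> ball z (r/K) \<inter> closure \<Omega> \<subseteq> \<Omega>"
    using uniform_domain_corkscrew[OF ud unb] by metis
  obtain m :: nat where m: "4 * K < 2 ^ m" using real_arch_pow[of 2 "4*K"] by auto
  show ?thesis
  proof
    fix x r assume x: "x \<in> bdry \<Omega>" and r: "0 < (r::real)"
    obtain z where z: "z \<in> \<Omega>" "ball z (r/K) \<subseteq> ball x r" "ball z (r/K) \<inter> closure \<Omega> \<subseteq> \<Omega>"
      using cork[OF x r] by blast
    have rK: "0 < r / K" using r K by simp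
    have "emeasure \<mu> (ball x r \<inter> \<Omega>) \<le> emeasure \<mu> (ball x r \<inter> closure \<Omega>)"
      using \<Omega>_cl by (intro emeasure_mono) (auto simp: sets_\<mu>)
    also have "\<dots> < \<infinity>" using fin x bdry_cl r by blast
    finally have small: "measure \<mu> (ball z (r/K) \<inter> closure \<Omega>) \<le> measure \<mu> (ball x r \<inter> \<Omega>)"
      using z \<open>open \<Omega>\<close> by (intro measure_mono_finite) (auto simp: sets_\<mu>)
    then show "0 < measure \<mu> (ball x r \<inter> \<Omega>)"
      using pos[of z "r/K"] z(1) \<Omega>_cl rK by force
    have "dist x z < r" using z(2) rK by (auto dest: subsetD[of _ _ z])
    have "ball x (2*r) \<subseteq> ball z (2^m * (r/K))"
    proof
      fix w assume "w \<in> ball x (2*r)"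
      then have "dist z w < 4 * r"
        using \<open>dist x z < r\<close> r dist_triangle[of z w x] by (simp add: dist_commute)
      also have "4 * r \<le> 2^m * (r/K)" using m K r by (simp add: field_simps)
      finally show "w \<in> ball z (2^m * (r/K))" by simp
    qed
    then have "ball x (2*r) \<inter> \<Omega> \<subseteq> ball z (2^m * (r/K)) \<inter> closure \<Omega>"
      using \<Omega>_cl by blast
    then have "measure \<mu> (ball x (2*r) \<inter> \<Omega>) \<le> measure \<mu> (ball z (2^m * (r/K)) \<inter> closure \<Omega>)"
      using z(1) \<Omega>_cl rK fin[of z "2^m * (r/K)"] \<open>open \<Omega>\<close> mult_pos_pos[OF _ rK, of "2^m"]
      by (intro measure_mono_finite) (auto simp: sets_\<mu>)
    also have "\<dots> \<le> Cm^m * measure \<mu> (ball z (r/K) \<inter> closure \<Omega>)"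
      using D z(1) \<Omega>_cl Cm rK by (intro measure_ball_doubling_iterate) auto
    also have "\<dots> \<le> Cm^m * measure \<mu> (ball x r \<inter> \<Omega>)"
      using small Cm by (intro mult_left_mono) auto
    finally show "measure \<mu> (ball x (2*r) \<inter> \<Omega>) \<le> Cm^m * measure \<mu> (ball x r \<inter> \<Omega>)" .
  qed (use Cm in simp)
qed

lemma standing_hyps_boundary_comparison:
  fixes \<mu> \<nu> :: "'a::metric_space measure"
  assumes hyps: "standing_hyps p \<mu> \<Omega> \<nu> \<Theta>" and unb: "\<not> bounded (bdry \<Omega>)"
  obtains C where "1 \<le> C"
    "\<And>x r. x \<in> bdry \<Omega> \<Longrightarrow> 0 < r \<Longrightarrow>
       measure \<mu> (ball x r \<inter> \<Omega>) * r powr (-\<Theta>) \<le> C * measure \<nu> (ball x r)"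
    "\<And>x r. x \<in> bdry \<Omega> \<Longrightarrow> 0 < r \<Longrightarrow>
       measure \<nu> (ball x r) \<le> C * measure \<mu> (ball x r \<inter> \<Omega>) * r powr (-\<Theta>)"
proof -
  have sets_\<mu>: "sets \<mu> = sets borel" and dbl: "doubling_on \<mu> (closure \<Omega>)"
    and \<nu>_fin: "\<And>x r. 0 < r \<Longrightarrow> emeasure \<nu> (ball x r) < \<infinity>"
    using hyps unfolding standing_hyps_def by auto
  obtain C where C: "1 \<le> C" and cmp: "\<forall>x\<in>bdry \<Omega>. \<forall>r. 0 < r \<and>
        (bounded (bdry \<Omega>) \<longrightarrow> r < 2 * diameter (bdry \<Omega>)) \<longrightarrow>
        ennreal (1/C) * emeasure \<mu> (ball x r \<inter> \<Omega>) * ennreal (r powr (-\<Theta>)) \<le> emeasure \<nu> (ball x r) \<and>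
        emeasure \<nu> (ball x r) \<le> ennreal C * emeasure \<mu> (ball x r \<inter> \<Omega>) * ennreal (r powr (-\<Theta>))"
    using hyps unfolding standing_hyps_def by blast
  have fin: "\<And>x r. x \<in> closure \<Omega> \<Longrightarrow> 0 < r \<Longrightarrow> emeasure \<mu> (ball x r \<inter> closure \<Omega>) < \<infinity>"
    using doubling_onE[OF dbl] by metis
  show ?thesis
  proof (rule that[OF C])
    fix x r assume x: "x \<in> bdry \<Omega>" and r: "0 < (r::real)"
    have "emeasure \<mu> (ball x r \<inter> \<Omega>) \<le> emeasure \<mu> (ball x r \<inter> closure \<Omega>)"
      by (intro emeasure_mono) (auto simp: sets_\<mu> closure_subset[THEN subsetD])
    also have "\<dots> < \<infinity>" using fin x r unfolding bdry_def by blast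
    finally have \<mu>_eq: "emeasure \<mu> (ball x r \<inter> \<Omega>) = ennreal (measure \<mu> (ball x r \<inter> \<Omega>))"
      by (intro emeasure_eq_ennreal_measure) simp
    have \<nu>_eq: "emeasure \<nu> (ball x r) = ennreal (measure \<nu> (ball x r))"
      using \<nu>_fin[OF r] by (intro emeasure_eq_ennreal_measure) (simp add: less_top)
    have "ennreal (1/C) * emeasure \<mu> (ball x r \<inter> \<Omega>) * ennreal (r powr (-\<Theta>))
            = ennreal (1/C * measure \<mu> (ball x r \<inter> \<Omega>) * r powr (-\<Theta>))"
      "ennreal C * emeasure \<mu> (ball x r \<inter> \<Omega>) * ennreal (r powr (-\<Theta>))
            = ennreal (C * measure \<mu> (ball x r \<inter> \<Omega>) * r powr (-\<Theta>))"
      using C unfolding \<mu>_eq by (simp_all add: ennreal_mult[symmetric] del: ennreal_mult_divide_eq)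
    moreover have "ennreal (1/C) * emeasure \<mu> (ball x r \<inter> \<Omega>) * ennreal (r powr (-\<Theta>))
          \<le> emeasure \<nu> (ball x r)"
      "emeasure \<nu> (ball x r) \<le> ennreal C * emeasure \<mu> (ball x r \<inter> \<Omega>) * ennreal (r powr (-\<Theta>))"
      using cmp x r unb by blast+
    ultimately show "measure \<mu> (ball x r \<inter> \<Omega>) * r powr (-\<Theta>) \<le> C * measure \<nu> (ball x r)"
      "measure \<nu> (ball x r) \<le> C * measure \<mu> (ball x r \<inter> \<Omega>) * r powr (-\<Theta>)"
      unfolding \<nu>_eq
      using C by (simp_all add: ennreal_le_iff field_simps)
  qed
qed

lemma standing_hyps_doubling_at_boundary:
  fixes \<mu> \<nu> :: "'a::metric_space measure"
  assumes hyps: "standing_hyps p \<mu> \<Omega> \<nu> \<Theta>" and unb: "\<not> bounded (bdry \<Omega>)"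
  obtains Cd where "1 \<le> Cd"
    "\<And>x r. x \<in> bdry \<Omega> \<Longrightarrow> 0 < r \<Longrightarrow> 0 < measure \<nu> (ball x r)"
    "\<And>x r. x \<in> bdry \<Omega> \<Longrightarrow> 0 < r \<Longrightarrow> measure \<nu> (ball x (2*r)) \<le> Cd * measure \<nu> (ball x r)"
proof -
  have \<Theta>: "0 < \<Theta>" using hyps unfolding standing_hyps_def by auto
  obtain C where C: "1 \<le> C"
    and lower: "\<And>x r. x \<in> bdry \<Omega> \<Longrightarrow> 0 < r \<Longrightarrow>
       measure \<mu> (ball x r \<inter> \<Omega>) * r powr (-\<Theta>) \<le> C * measure \<nu> (ball x r)"
    and upper: "\<And>x r. x \<in> bdry \<Omega> \<Longrightarrow> 0 < r \<Longrightarrow>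
       measure \<nu> (ball x r) \<le> C * measure \<mu> (ball x r \<inter> \<Omega>) * r powr (-\<Theta>)"
    using standing_hyps_boundary_comparison[OF hyps unb] by metis
  obtain A where A: "1 \<le> A"
    and pos: "\<And>x r. x \<in> bdry \<Omega> \<Longrightarrow> 0 < r \<Longrightarrow> 0 < measure \<mu> (ball x r \<inter> \<Omega>)"
    and dbl: "\<And>x r. x \<in> bdry \<Omega> \<Longrightarrow> 0 < r \<Longrightarrow>
       measure \<mu> (ball x (2*r) \<inter> \<Omega>) \<le> A * measure \<mu> (ball x r \<inter> \<Omega>)"
    using uniform_domain_doubling_at_boundary[OF _ unb, of \<mu>] hyps
    unfolding standing_hyps_def by metis
  show ?thesis
  proof
    fix x r assume x: "x \<in> bdry \<Omega>" and r: "0 < (r::real)"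
    have "0 < measure \<mu> (ball x r \<inter> \<Omega>) * r powr (-\<Theta>)" using pos[OF x r] r by simp
    then show "0 < measure \<nu> (ball x r)"
      using lower[OF x r] C by (smt (verit) mult_le_0_iff)
    have "measure \<nu> (ball x (2*r)) \<le> C * measure \<mu> (ball x (2*r) \<inter> \<Omega>) * (2*r) powr (-\<Theta>)"
      using upper x r by simp
    also have "\<dots> \<le> C * (A * measure \<mu> (ball x r \<inter> \<Omega>)) * (2*r) powr (-\<Theta>)"
      using dbl[OF x r] C by (intro mult_right_mono mult_left_mono) auto
    also have "\<dots> = C * A * 2 powr (-\<Theta>) * (measure \<mu> (ball x r \<inter> \<Omega>) * r powr (-\<Theta>))"
      using r by (simp add: powr_mult)
    also have "\<dots> \<le> C * A * 1 * (C * measure \<nu> (ball x r))"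
    proof (rule mult_mono)
      show "C * A * 2 powr (-\<Theta>) \<le> C * A * 1"
        using C A \<Theta> by (intro mult_left_mono) (auto simp: powr_minus_divide ge_one_powr_ge_zero)
    qed (use lower[OF x r] C A in auto)
    finally show "measure \<nu> (ball x (2*r)) \<le> C * A * C * measure \<nu> (ball x r)"
      by (simp add: mult.assoc)
  next
    have "1 \<le> C * A" using mult_mono[OF C A] C by simp
    then show "1 \<le> C * A * C" using mult_mono[OF _ C] C by fastforce
  qed
qed

lemma standing_hyps_boundary_ball_pos:
  fixes \<mu> \<nu> :: "'a::metric_space measure"
  assumes "standing_hyps p \<mu> \<Omega> \<nu> \<Theta>" "\<not> bounded (bdry \<Omega>)" "x \<in> bdry \<Omega>" "0 < r"
  shows "0 < measure \<nu> (ball x r)"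
  using standing_hyps_doubling_at_boundary[OF assms(1,2)] assms(3,4) by metis

definition besov_kernel ::
  "'a::metric_space measure \<Rightarrow> real \<Rightarrow> real \<Rightarrow> ('a \<Rightarrow> real) \<Rightarrow> 'a \<Rightarrow> 'a \<Rightarrow> real" where
  "besov_kernel \<nu> s p h x y =
     \<bar>h x - h y\<bar> powr p / (dist x y powr s * measure \<nu> (ball x (dist x y)))"

lemma besov_kernel_nonneg: "0 \<le> besov_kernel \<nu> s p h x y"
  by (simp add: besov_kernel_def)

lemma HB_iff_besov_kernel:
  "h \<in> HB p \<theta> \<nu> \<longleftrightarrow> h \<in> borel_measurable \<nu> \<and>
     (\<integral>\<^sup>+ x. \<integral>\<^sup>+ y. ennreal (besov_kernel \<nu> (\<theta> * p) p h x y) \<partial>\<nu> \<partial>\<nu>) < \<infinity>"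
  by (simp add: HB_def besov_kernel_def)

lemma abs_diff_powr_le_besov_kernel:
  assumes "x \<noteq> y \<Longrightarrow> 0 < measure \<nu> (ball x (dist x y))"
    and "dist x y powr s * measure \<nu> (ball x (dist x y)) \<le> W"
  shows "\<bar>h x - h y\<bar> powr p \<le> W * besov_kernel \<nu> s p h x y"
proof (cases "x = y")
  case False
  then have "0 < dist x y powr s * measure \<nu> (ball x (dist x y))" using assms(1) by simp
  then have "\<bar>h x - h y\<bar> powr p = (dist x y powr s * measure \<nu> (ball x (dist x y))) * besov_kernel \<nu> s p h x y"
    unfolding besov_kernel_def
    by (metis less_irrefl nonzero_mult_div_cancel_left times_divide_eq_right)
  also have "\<dots> \<le> W * besov_kernel \<nu> s p h x y"
    using assms(2) by (intro mult_right_mono besov_kernel_nonneg)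
  finally show ?thesis .
qed (simp add: besov_kernel_def)

lemma mono_measure_ball:
  assumes "sets M = sets borel" "\<And>r. 0 < r \<Longrightarrow> emeasure M (ball x r) < \<infinity>"
  shows "mono (\<lambda>r. measure M (ball x r))"
proof (rule monoI)
  fix r r' :: real assume "r \<le> r'"
  then show "measure M (ball x r) \<le> measure M (ball x r')"
    using assms by (cases "0 < r'") (auto intro!: measure_mono_finite simp: ball_empty)
qed

lemma borel_measurable_dist_sets_borel:
  assumes "sets M = sets borel"
  shows "(\<lambda>y. dist x y) \<in> borel_measurable M" "(\<lambda>y. dist y x) \<in> borel_measurable M"
proof -
  have "(\<lambda>y. dist x y) \<in> borel_measurable borel" "(\<lambda>y. dist y x) \<in> borel_measurable borel"
    by (intro borel_measurable_continuous_onI continuous_intros)+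
  then show "(\<lambda>y. dist x y) \<in> borel_measurable M" "(\<lambda>y. dist y x) \<in> borel_measurable M"
    using measurable_cong_sets[OF assms refl] by auto
qed

lemma borel_measurable_measure_ball_dist:
  assumes "sets M = sets borel" "\<And>r. 0 < r \<Longrightarrow> emeasure M (ball x r) < \<infinity>"
  shows "(\<lambda>y. measure M (ball x (dist x y))) \<in> borel_measurable M"
  using measurable_compose[OF borel_measurable_dist_sets_borel(1)[OF assms(1)]
      borel_measurable_mono[OF mono_measure_ball[OF assms]]] by simp

lemma borel_measurable_besov_kernel:
  assumes "sets M = sets borel" "\<And>r. 0 < r \<Longrightarrow> emeasure M (ball x r) < \<infinity>"
    and "h \<in> borel_measurable M"
  shows "besov_kernel M s p h x \<in> borel_measurable M"
  unfolding besov_kernel_def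
  using borel_measurable_dist_sets_borel[OF assms(1)] borel_measurable_measure_ball_dist[OF assms(1,2)]
    assms(3) by measurable

lemma borel_measurable_Jweight:
  assumes "sets M = sets borel" "\<And>r. 0 < r \<Longrightarrow> emeasure M (ball x0 r) < \<infinity>"
  shows "Jweight p \<Theta> M x0 \<in> borel_measurable M"
  unfolding Jweight_def
  using borel_measurable_dist_sets_borel[OF assms(1)] borel_measurable_measure_ball_dist[OF assms]
  by measurable

lemma nn_integral_finite_imp_finite_point:
  assumes "(\<integral>\<^sup>+ x. g x \<partial>M) < \<infinity>" "A \<in> sets M" "emeasure M A \<noteq> 0"
  shows "\<exists>x\<in>A. g x < \<infinity>"
proof (rule ccontr)
  assume "\<not> (\<exists>x\<in>A. g x < \<infinity>)"
  then have "\<forall>x\<in>A. g x = \<infinity>" by (simp add: less_top[symmetric])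
  then have "(\<integral>\<^sup>+ x. \<infinity> * indicator A x \<partial>M) \<le> (\<integral>\<^sup>+ x. g x \<partial>M)"
    by (intro nn_integral_mono) (auto split: split_indicator)
  then show False
    using assms by (simp add: nn_integral_cmult_indicator ennreal_mult_eq_top_iff)
qed

lemma standing_hyps_boundary_measure_nonzero:
  fixes \<mu> \<nu> :: "'a::metric_space measure"
  assumes hyps: "standing_hyps p \<mu> \<Omega> \<nu> \<Theta>" and unb: "\<not> bounded (bdry \<Omega>)"
  shows "emeasure \<nu> (bdry \<Omega>) \<noteq> 0"
proof
  assume null: "emeasure \<nu> (bdry \<Omega>) = 0"
  have sets_\<nu>: "sets \<nu> = sets borel" and out: "emeasure \<nu> (UNIV - bdry \<Omega>) = 0"
    and "open \<Omega>"
    using hyps unfolding standing_hyps_def uniform_domain_def domain_def by auto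
  then have "bdry \<Omega> \<in> sets \<nu>" by (simp add: bdry_def closed_Diff)
  obtain x where x: "x \<in> bdry \<Omega>" using unb by fastforce
  have "0 < measure \<nu> (ball x 1)" using standing_hyps_boundary_ball_pos[OF hyps unb x] by simp
  have "emeasure \<nu> (ball x 1) \<le> emeasure \<nu> (bdry \<Omega> \<union> (UNIV - bdry \<Omega>))"
    by (intro emeasure_mono) (auto simp: sets_\<nu>)
  also have "\<dots> \<le> emeasure \<nu> (bdry \<Omega>) + emeasure \<nu> (UNIV - bdry \<Omega>)"
    using \<open>bdry \<Omega> \<in> sets \<nu>\<close> by (intro emeasure_subadditive) (auto simp: sets_\<nu>)
  finally have "measure \<nu> (ball x 1) = 0" using null out by (simp add: measure_def)
  with \<open>0 < measure \<nu> (ball x 1)\<close> show False by simp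
qed

lemma HB_integrable_kernel_slice:
  fixes \<mu> \<nu> :: "'a::metric_space measure"
  assumes hyps: "standing_hyps p \<mu> \<Omega> \<nu> \<Theta>" and unb: "\<not> bounded (bdry \<Omega>)"
    and h: "h \<in> HB p \<theta> \<nu>"
  obtains x1 where "x1 \<in> bdry \<Omega>" "integrable \<nu> (besov_kernel \<nu> (\<theta> * p) p h x1)"
proof -
  have sets_\<nu>: "sets \<nu> = sets borel" and "open \<Omega>"
    and \<nu>_fin: "\<And>x r. 0 < r \<Longrightarrow> emeasure \<nu> (ball x r) < \<infinity>"
    using hyps unfolding standing_hyps_def uniform_domain_def domain_def by auto
  have "bdry \<Omega> \<in> sets \<nu>" using \<open>open \<Omega>\<close> by (simp add: sets_\<nu> bdry_def closed_Diff)
  obtain x1 where x1: "x1 \<in> bdry \<Omega>"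
    and fin: "(\<integral>\<^sup>+ y. ennreal (besov_kernel \<nu> (\<theta> * p) p h x1 y) \<partial>\<nu>) < \<infinity>"
    using nn_integral_finite_imp_finite_point[OF _ \<open>bdry \<Omega> \<in> sets \<nu>\<close>
        standing_hyps_boundary_measure_nonzero[OF hyps unb]] h
    unfolding HB_iff_besov_kernel by metis
  have "integrable \<nu> (besov_kernel \<nu> (\<theta> * p) p h x1)"
    using h \<nu>_fin fin unfolding HB_iff_besov_kernel
    by (intro integrableI_nonneg borel_measurable_besov_kernel[OF sets_\<nu>])
       (auto simp: besov_kernel_nonneg)
  with x1 show ?thesis using that by blast
qed

lemma besov_denominator_le_near:
  assumes "sets \<nu> = sets borel" "\<And>r. 0 < r \<Longrightarrow> emeasure \<nu> (ball x r) < \<infinity>"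
    and "0 \<le> s" "dist x y \<le> R"
  shows "dist x y powr s * measure \<nu> (ball x (dist x y)) \<le> R powr s * measure \<nu> (ball x R)"
  using assms mono_measure_ball[OF assms(1,2)]
  by (intro mult_mono powr_mono2) (auto dest: monoD)

lemma besov_denominator_le_far:
  assumes sets_\<nu>: "sets \<nu> = sets borel" and fin: "\<And>z r. 0 < r \<Longrightarrow> emeasure \<nu> (ball z r) < \<infinity>"
    and dbl: "\<And>r. 0 < r \<Longrightarrow> measure \<nu> (ball x0 (2*r)) \<le> Cd * measure \<nu> (ball x0 r)"
    and "0 \<le> s" and far: "2 * dist x0 x < dist x0 y"
  shows "dist x y powr s * measure \<nu> (ball x (dist x y))
           \<le> 2 powr s * Cd * (dist x0 y powr s * measure \<nu> (ball x0 (dist x0 y)))"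
proof -
  define D where "D = dist x0 y"
  have D: "0 < D" using far zero_le_dist[of x0 x] unfolding D_def by linarith
  have d: "dist x y \<le> 2 * D"
    using dist_triangle[of x y x0] far zero_le_dist[of x x0] dist_commute[of x x0]
    unfolding D_def by linarith
  have "ball x (dist x y) \<subseteq> ball x0 (2 * D)"
  proof
    fix w assume "w \<in> ball x (dist x y)"
    then show "w \<in> ball x0 (2 * D)"
      using dist_triangle[of x0 w x] dist_triangle[of x y x0] far
      unfolding D_def by (simp add: dist_commute)
  qed
  then have "measure \<nu> (ball x (dist x y)) \<le> measure \<nu> (ball x0 (2 * D))"
    using D fin sets_\<nu> by (intro measure_mono_finite) auto
  also have "\<dots> \<le> Cd * measure \<nu> (ball x0 D)" using dbl D by simp
  finally have "dist x y powr s * measure \<nu> (ball x (dist x y))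
                  \<le> (2 powr s * D powr s) * (Cd * measure \<nu> (ball x0 D))"
    using d D \<open>0 \<le> s\<close> by (intro mult_mono) (auto simp: powr_mono2 simp flip: powr_mult)
  then show ?thesis unfolding D_def by (simp add: mult_ac)
qed

lemma Jweight_nonneg: "0 \<le> Jweight p \<Theta> \<nu> x0 y"
  by (simp add: Jweight_def)

lemma Jweight_powr:
  assumes "1 < p"
  shows "Jweight p \<Theta> \<nu> x0 y powr (p - 1)
           = dist x0 y powr (theta_of p \<Theta> * p) * measure \<nu> (ball x0 (dist x0 y))"
proof -
  have q: "conj_exp p * (p - 1) = p" using assms by (simp add: conj_exp_def)
  have "Jweight p \<Theta> \<nu> x0 y powr (p - 1)
          = dist x0 y powr (conj_exp p * (p - 1) * theta_of p \<Theta>)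
            * measure \<nu> (ball x0 (dist x0 y)) powr (conj_exp p * (p - 1) / p)"
    by (simp add: Jweight_def powr_mult powr_powr dist_commute mult_ac)
  then show ?thesis using assms by (simp add: q mult.commute)
qed

lemma standing_hyps_young_kernel_bound:
  fixes \<mu> \<nu> :: "'a::metric_space measure"
  assumes hyps: "standing_hyps p \<mu> \<Omega> \<nu> \<Theta>" and unb: "\<not> bounded (bdry \<Omega>)"
    and x0: "x0 \<in> bdry \<Omega>" and x1: "x1 \<in> bdry \<Omega>"
  obtains C where "0 \<le> C"
    "\<And>a h y. \<bar>a\<bar> * \<bar>h x1 - h y\<bar> \<le> \<bar>a\<bar> powr conj_exp p + \<bar>a\<bar> powr conj_exp p * Jweight p \<Theta> \<nu> x0 y
                 + C * besov_kernel \<nu> (theta_of p \<Theta> * p) p h x1 y"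
proof -
  define s where "s = theta_of p \<Theta> * p"
  define q where "q = conj_exp p"
  define J where "J = Jweight p \<Theta> \<nu> x0"
  have p: "1 < p" and sets_\<nu>: "sets \<nu> = sets borel"
    and fin: "\<And>z r. 0 < r \<Longrightarrow> emeasure \<nu> (ball z r) < \<infinity>"
    using hyps unfolding standing_hyps_def by auto
  have "0 < s" using hyps unfolding standing_hyps_def s_def theta_of_def by (simp add: field_simps)
  obtain Cd where Cd: "1 \<le> Cd"
    and pos: "\<And>x r. x \<in> bdry \<Omega> \<Longrightarrow> 0 < r \<Longrightarrow> 0 < measure \<nu> (ball x r)"
    and dbl: "\<And>r. 0 < r \<Longrightarrow> measure \<nu> (ball x0 (2*r)) \<le> Cd * measure \<nu> (ball x0 r)"
    using standing_hyps_doubling_at_boundary[OF hyps unb] x0 by metis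
  define R where "R = 3 * dist x0 x1"
  define C where "C = max (R powr s * measure \<nu> (ball x1 R)) (2 powr s * Cd)"
  have kernel: "\<bar>h x1 - h y\<bar> powr p \<le> W * besov_kernel \<nu> s p h x1 y"
    if "dist x1 y powr s * measure \<nu> (ball x1 (dist x1 y)) \<le> W" for h y W
    using that pos[OF x1] by (intro abs_diff_powr_le_besov_kernel) auto
  have "\<bar>a\<bar> * \<bar>h x1 - h y\<bar> \<le> \<bar>a\<bar> powr q + \<bar>a\<bar> powr q * J y + C * besov_kernel \<nu> s p h x1 y"
    for a h y
  proof (cases "dist x0 y \<le> 2 * dist x0 x1")
    case True
    then have "dist x1 y \<le> R"
      using dist_triangle[of x1 y x0] unfolding R_def by (simp add: dist_commute)
    then have "\<bar>h x1 - h y\<bar> powr p \<le> C * besov_kernel \<nu> s p h x1 y"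
      using \<open>0 < s\<close> fin sets_\<nu>
      by (intro kernel order.trans[OF besov_denominator_le_near]) (auto simp: C_def)
    moreover have "\<bar>a\<bar> * \<bar>h x1 - h y\<bar> \<le> \<bar>a\<bar> powr q + \<bar>h x1 - h y\<bar> powr p"
      using Youngs_inequality_weighted[OF p, of "\<bar>a\<bar>" "\<bar>h x1 - h y\<bar>" 1] unfolding q_def by simp
    ultimately show ?thesis
      using mult_nonneg_nonneg[OF powr_ge_zero Jweight_nonneg, of "\<bar>a\<bar>" q p \<Theta> \<nu> x0 y]
      unfolding J_def by linarith
  next
    case False
    define V where "V = dist x0 y powr s * measure \<nu> (ball x0 (dist x0 y))"
    have "0 < dist x0 y" using False zero_le_dist[of x0 x1] by linarith
    then have "0 < V" using pos[OF x0] \<open>0 < s\<close> by (simp add: V_def)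
    have JV: "J y powr (p - 1) = V" using Jweight_powr[OF p] by (simp add: J_def V_def s_def)
    then have "0 < J y"
      using \<open>0 < V\<close> Jweight_nonneg[of p \<Theta> \<nu> x0 y] unfolding J_def by (cases "J y = 0") auto
    have "\<bar>h x1 - h y\<bar> powr p \<le> (2 powr s * Cd * V) * besov_kernel \<nu> s p h x1 y"
      using False \<open>0 < s\<close> fin sets_\<nu> dbl unfolding V_def
      by (intro kernel besov_denominator_le_far) auto
    then have "\<bar>h x1 - h y\<bar> powr p / J y powr (p - 1) \<le> 2 powr s * Cd * besov_kernel \<nu> s p h x1 y"
      using \<open>0 < V\<close> unfolding JV by (simp add: divide_le_eq mult_ac)
    also have "\<dots> \<le> C * besov_kernel \<nu> s p h x1 y"
      by (intro mult_right_mono) (simp_all add: C_def besov_kernel_nonneg)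
    finally have "\<bar>h x1 - h y\<bar> powr p / J y powr (p - 1) \<le> C * besov_kernel \<nu> s p h x1 y" .
    moreover have "\<bar>a\<bar> * \<bar>h x1 - h y\<bar> \<le> \<bar>a\<bar> powr q * J y + \<bar>h x1 - h y\<bar> powr p / J y powr (p - 1)"
      using Youngs_inequality_weighted[OF p _ _ \<open>0 < J y\<close>] unfolding q_def by simp
    ultimately show ?thesis using powr_ge_zero[of "\<bar>a\<bar>" q] by linarith
  qed
  moreover have "0 \<le> C" using Cd unfolding C_def by (intro max.coboundedI2) simp
  ultimately show ?thesis using that unfolding s_def q_def J_def by blast
qed

lemma integrable_mult_HB:
  fixes \<mu> \<nu> :: "'a::metric_space measure"
  assumes hyps: "standing_hyps p \<mu> \<Omega> \<nu> \<Theta>" and unb: "\<not> bounded (bdry \<Omega>)"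
    and x0: "x0 \<in> bdry \<Omega>"
    and f_meas: "f \<in> borel_measurable \<nu>" and f_int: "integrable \<nu> f"
    and f_Lp: "(\<integral>\<^sup>+ x. ennreal (\<bar>f x\<bar> powr conj_exp p) \<partial>\<nu>) < \<infinity>"
    and f_LpJ: "(\<integral>\<^sup>+ x. ennreal (\<bar>f x\<bar> powr conj_exp p)
                   \<partial>(density \<nu> (\<lambda>x. ennreal (Jweight p \<Theta> \<nu> x0 x)))) < \<infinity>"
    and h: "h \<in> HB p (theta_of p \<Theta>) \<nu>"
  shows "integrable \<nu> (\<lambda>y. f y * h y)"
proof -
  define q where "q = conj_exp p"
  define J where "J = Jweight p \<Theta> \<nu> x0"
  have sets_\<nu>: "sets \<nu> = sets borel" and fin: "\<And>z r. 0 < r \<Longrightarrow> emeasure \<nu> (ball z r) < \<infinity>"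
    using hyps unfolding standing_hyps_def by auto
  have h_meas: "h \<in> borel_measurable \<nu>" using h unfolding HB_def by simp
  have J_meas: "J \<in> borel_measurable \<nu>"
    unfolding J_def using borel_measurable_Jweight[OF sets_\<nu> fin] .
  obtain x1 where x1: "x1 \<in> bdry \<Omega>"
    and K_int: "integrable \<nu> (besov_kernel \<nu> (theta_of p \<Theta> * p) p h x1)"
    using HB_integrable_kernel_slice[OF hyps unb h] by metis
  obtain C where bound: "\<And>y. \<bar>f y\<bar> * \<bar>h x1 - h y\<bar> \<le> \<bar>f y\<bar> powr q + \<bar>f y\<bar> powr q * J y
                                  + C * besov_kernel \<nu> (theta_of p \<Theta> * p) p h x1 y"
    using standing_hyps_young_kernel_bound[OF hyps unb x0 x1] unfolding q_def J_def by metis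
  have fq_int: "integrable \<nu> (\<lambda>y. \<bar>f y\<bar> powr q)"
    using f_meas f_Lp unfolding q_def by (intro integrableI_nonneg) auto
  have "(\<integral>\<^sup>+ y. ennreal (\<bar>f y\<bar> powr q * J y) \<partial>\<nu>)
          = (\<integral>\<^sup>+ y. ennreal (J y) * ennreal (\<bar>f y\<bar> powr q) \<partial>\<nu>)"
    by (intro nn_integral_cong) (simp add: ennreal_mult J_def Jweight_nonneg mult.commute)
  also have "\<dots> = (\<integral>\<^sup>+ y. ennreal (\<bar>f y\<bar> powr q) \<partial>density \<nu> (\<lambda>x. ennreal (J x)))"
    using f_meas J_meas by (intro nn_integral_density[symmetric]) auto
  finally have fqJ_int: "integrable \<nu> (\<lambda>y. \<bar>f y\<bar> powr q * J y)"
    using f_meas J_meas f_LpJ unfolding q_def J_def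
    by (intro integrableI_nonneg) (auto simp: Jweight_nonneg)
  show ?thesis
  proof (rule Bochner_Integration.integrable_bound)
    show "integrable \<nu> (\<lambda>y. \<bar>f y\<bar> powr q + \<bar>f y\<bar> powr q * J y
            + C * besov_kernel \<nu> (theta_of p \<Theta> * p) p h x1 y + \<bar>h x1\<bar> * \<bar>f y\<bar>)"
      using fq_int fqJ_int K_int f_int by auto
    show "(\<lambda>y. f y * h y) \<in> borel_measurable \<nu>" using f_meas h_meas by simp
    have "\<bar>f y * h y\<bar> \<le> \<bar>f y\<bar> * \<bar>h x1 - h y\<bar> + \<bar>h x1\<bar> * \<bar>f y\<bar>" for y
    proof -
      have "\<bar>f y\<bar> * \<bar>h y\<bar> \<le> \<bar>f y\<bar> * (\<bar>h x1 - h y\<bar> + \<bar>h x1\<bar>)"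
        by (intro mult_left_mono) auto
      then show ?thesis by (simp add: abs_mult algebra_simps)
    qed
    then show "AE y in \<nu>. norm (f y * h y) \<le> norm (\<bar>f y\<bar> powr q + \<bar>f y\<bar> powr q * J y
            + C * besov_kernel \<nu> (theta_of p \<Theta> * p) p h x1 y + \<bar>h x1\<bar> * \<bar>f y\<bar>)"
      using bound by (intro AE_I2) (smt (verit) real_norm_def)
  qed
qed

lemma abs_le_one_plus_powr:
  fixes x p :: real
  assumes "1 \<le> p"
  shows "\<bar>x\<bar> \<le> 1 + \<bar>x\<bar> powr p"
proof (cases "\<bar>x\<bar> \<le> 1")
  case False
  then have "\<bar>x\<bar> powr 1 \<le> \<bar>x\<bar> powr p" using assms by (intro powr_mono) auto
  then show ?thesis by simp
qed (simp add: add_increasing2)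

lemma integrable_HB_mult_indicator:
  fixes \<mu> \<nu> :: "'a::metric_space measure"
  assumes hyps: "standing_hyps p \<mu> \<Omega> \<nu> \<Theta>" and unb: "\<not> bounded (bdry \<Omega>)"
    and h: "h \<in> HB p \<theta> \<nu>" and "0 \<le> \<theta>"
    and B: "B \<in> sets \<nu>" "bounded B"
  shows "integrable \<nu> (\<lambda>y. h y * indicator B y)"
proof -
  have p: "1 < p" and sets_\<nu>: "sets \<nu> = sets borel"
    and fin: "\<And>z r. 0 < r \<Longrightarrow> emeasure \<nu> (ball z r) < \<infinity>"
    using hyps unfolding standing_hyps_def by auto
  obtain x1 where x1: "x1 \<in> bdry \<Omega>" and K_int: "integrable \<nu> (besov_kernel \<nu> (\<theta> * p) p h x1)"
    using HB_integrable_kernel_slice[OF hyps unb h] by metis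
  obtain R where R: "0 < R" "B \<subseteq> ball x1 R"
    using bounded_subset_ballD[OF \<open>bounded B\<close>] by blast
  define W where "W = R powr (\<theta> * p) * measure \<nu> (ball x1 R)"
  have "emeasure \<nu> B \<le> emeasure \<nu> (ball x1 R)"
    using R(2) sets_\<nu> by (intro emeasure_mono) auto
  also have "\<dots> < \<infinity>" using fin[OF R(1)] .
  finally have ind_int: "integrable \<nu> (indicator B :: 'a \<Rightarrow> real)"
    using B by (intro integrable_real_indicator) auto
  show ?thesis
  proof (rule Bochner_Integration.integrable_bound)
    show "integrable \<nu> (\<lambda>y. (\<bar>h x1\<bar> + 1) * indicator B y + W * besov_kernel \<nu> (\<theta> * p) p h x1 y)"
      using ind_int K_int by auto
    show "(\<lambda>y. h y * indicator B y) \<in> borel_measurable \<nu>"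
      using h B unfolding HB_def by (intro borel_measurable_times borel_measurable_indicator) auto
    have "\<bar>h y\<bar> \<le> \<bar>h x1\<bar> + 1 + W * besov_kernel \<nu> (\<theta> * p) p h x1 y" if "y \<in> B" for y
    proof -
      have "\<bar>h x1 - h y\<bar> powr p \<le> W * besov_kernel \<nu> (\<theta> * p) p h x1 y"
        using that R \<open>0 \<le> \<theta>\<close> p standing_hyps_boundary_ball_pos[OF hyps unb x1] fin sets_\<nu>
        unfolding W_def
        by (intro abs_diff_powr_le_besov_kernel besov_denominator_le_near) auto
      then show ?thesis using abs_le_one_plus_powr[of p "h x1 - h y"] p by linarith
    qed
    then show "AE y in \<nu>. norm (h y * indicator B y)
        \<le> norm ((\<bar>h x1\<bar> + 1) * indicator B y + W * besov_kernel \<nu> (\<theta> * p) p h x1 y)"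
      by (intro AE_I2) (auto split: split_indicator simp: W_def besov_kernel_nonneg)
  qed
qed

lemma truncated_integrals_bounded:
  fixes f h :: "'a \<Rightarrow> real" and c :: real
  assumes f: "integrable M f" and fh: "integrable M (\<lambda>x. f x * h x)"
    and hB: "integrable M (\<lambda>x. h x * indicator B x)" and A: "\<And>k. A k \<in> sets M"
  shows "(\<forall>k. integrable M
            (\<lambda>x. (f x * indicator (A k) x - c * (\<integral>y\<in>A k. f y \<partial>M) * indicator B x) * h x)) \<and>
         bdd_above (range (\<lambda>k. \<bar>\<integral>x. (f x * indicator (A k) x
            - c * (\<integral>y\<in>A k. f y \<partial>M) * indicator B x) * h x \<partial>M\<bar>))"
proof -
  define g where "g k x = (f x * indicator (A k) x - c * (\<integral>y\<in>A k. f y \<partial>M) * indicator B x) * h x"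
    for k x
  have g_eq: "g k x = indicator (A k) x *\<^sub>R (f x * h x) - (c * (\<integral>y\<in>A k. f y \<partial>M)) * (h x * indicator B x)"
    for k x by (simp add: g_def algebra_simps)
  have int: "integrable M (g k)" for k
    unfolding g_eq[abs_def] using integrable_mult_indicator[OF A fh] hB by auto
  have abs_int_le: "\<bar>\<integral>x. indicator (A k) x *\<^sub>R u x \<partial>M\<bar> \<le> (\<integral>x. \<bar>u x\<bar> \<partial>M)"
    if "integrable M u" for u :: "'a \<Rightarrow> real" and k
  proof -
    have "\<bar>\<integral>x. indicator (A k) x *\<^sub>R u x \<partial>M\<bar> \<le> (\<integral>x. norm (indicator (A k) x *\<^sub>R u x) \<partial>M)"
      using integral_norm_bound by (metis real_norm_def)
    also have "\<dots> \<le> (\<integral>x. \<bar>u x\<bar> \<partial>M)"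
      using that A
      by (intro integral_mono integrable_norm integrable_abs integrable_mult_indicator)
         (auto split: split_indicator)
    finally show ?thesis .
  qed
  have "\<bar>\<integral>x. g k x \<partial>M\<bar> \<le> (\<integral>x. \<bar>f x * h x\<bar> \<partial>M) + \<bar>c\<bar> * (\<integral>x. \<bar>f x\<bar> \<partial>M) * \<bar>\<integral>x. h x * indicator B x \<partial>M\<bar>"
    for k
  proof -
    have "(\<integral>x. g k x \<partial>M) = (\<integral>x. indicator (A k) x *\<^sub>R (f x * h x) \<partial>M)
            - c * (\<integral>y\<in>A k. f y \<partial>M) * (\<integral>x. h x * indicator B x \<partial>M)"
      unfolding g_eq using integrable_mult_indicator[OF A fh] hB by simp
    then have "\<bar>\<integral>x. g k x \<partial>M\<bar> \<le> \<bar>\<integral>x. indicator (A k) x *\<^sub>R (f x * h x) \<partial>M\<bar>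
                 + \<bar>c * (\<integral>y\<in>A k. f y \<partial>M)\<bar> * \<bar>\<integral>x. h x * indicator B x \<partial>M\<bar>"
      by (metis abs_mult abs_triangle_ineq4)
    also have "\<dots> \<le> (\<integral>x. \<bar>f x * h x\<bar> \<partial>M)
                      + \<bar>c\<bar> * (\<integral>x. \<bar>f x\<bar> \<partial>M) * \<bar>\<integral>x. h x * indicator B x \<partial>M\<bar>"
      using abs_int_le[OF fh, of k] abs_int_le[OF f, of k]
      by (intro add_mono mult_right_mono)
         (auto simp: abs_mult set_lebesgue_integral_def intro: mult_left_mono)
    finally show ?thesis .
  qed
  then have "bdd_above (range (\<lambda>k. \<bar>\<integral>x. g k x \<partial>M\<bar>))" by (rule bdd_aboveI2)
  then show ?thesis using int unfolding g_def by blast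
qed

theorem lemma6p1:
  fixes p \<Theta> :: real and \<mu> \<nu> :: "'a::metric_space measure" and \<Omega> :: "'a set"
    and x0 :: 'a and f h :: "'a \<Rightarrow> real"
  assumes hyps: "standing_hyps p \<mu> \<Omega> \<nu> \<Theta>"
    and unb: "\<not> bounded (bdry \<Omega>)"
    and x0: "x0 \<in> bdry \<Omega>"
    and f_meas: "f \<in> borel_measurable \<nu>"
    and f_Lp: "(\<integral>\<^sup>+ x. ennreal (\<bar>f x\<bar> powr conj_exp p) \<partial>\<nu>) < \<infinity>"
    and f_LpJ: "(\<integral>\<^sup>+ x. ennreal (\<bar>f x\<bar> powr conj_exp p)
                   \<partial>(density \<nu> (\<lambda>x. ennreal (Jweight p \<Theta> \<nu> x0 x)))) < \<infinity>"
    and f_int: "integrable \<nu> f"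
    and f_mean: "(\<integral>x. f x \<partial>\<nu>) = 0"
    and h: "h \<in> HB p (theta_of p \<Theta>) \<nu>"
  shows "(\<forall>k. integrable \<nu> (\<lambda>x. fk \<nu> \<Omega> x0 f k x * h x)) \<and>
         bdd_above (range (\<lambda>k. \<bar>\<integral>x. fk \<nu> \<Omega> x0 f k x * h x \<partial>\<nu>\<bar>))"
proof -
  have sets_\<nu>: "sets \<nu> = sets borel" and "0 \<le> theta_of p \<Theta>"
    using hyps unfolding standing_hyps_def theta_of_def by auto
  have Bk_eq: "Bk \<Omega> x0 k = closure \<Omega> \<inter> ball x0 (2 ^ k)" for k
    unfolding Bk_def by (auto simp: dist_commute)
  have Bk_sets: "Bk \<Omega> x0 k \<in> sets \<nu>" for k
    unfolding Bk_eq by (simp add: sets_\<nu>)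
  have "bounded (Bk \<Omega> x0 0)" unfolding Bk_eq by (simp add: bounded_Int)
  then have "integrable \<nu> (\<lambda>x. h x * indicator (Bk \<Omega> x0 0) x)"
    using integrable_HB_mult_indicator[OF hyps unb h \<open>0 \<le> theta_of p \<Theta>\<close> Bk_sets] by blast
  then show ?thesis
    unfolding fk_def
    by (rule truncated_integrals_bounded[where A = "Bk \<Omega> x0",
          OF f_int integrable_mult_HB[OF hyps unb x0 f_meas f_int f_Lp f_LpJ h] _ Bk_sets])
qed

end
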